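(* Let $G$ be a group with a conjugation-closed generating set $X$ and let $g\in\mathrm{Mon}(X)$. The poset $\mathrm{Fact}(G,g,\mathbf I)$ is simplicial, i.e. each of its intervals $[\mathbf x,\mathbf y]$ (with $\mathbf x\le\mathbf y$) is isomorphic to a Boolean lattice.
   Context: $\mathrm{Mon}(X)$ is the generated submonoid; $\ell(x)$ is the minimal length of a product of elements of $X$ equal to $x$. A linear factorization of $g$ is a row vector $[x_L\ x_1\ \cdots\ x_k\ x_R]$ ($k\ge0$) of elements of $\mathrm{Mon}(X)$ with $x_1,\dots,x_k\ne1$ ($x_L,x_R$ may be trivial), $\ell(x_L)+\sum_i\ell(x_i)+\ell(x_R)=\ell(g)$ and $x_Lx_1\cdots x_kx_R=g$. With $x_0=x_L$, $x_{k+1}=x_R$, the merge at position $i\in\{0,\dots,k\}$ replaces consecutive entries $x_i,x_{i+1}$ by the single entry $x_ix_{i+1}$. $\mathrm{Fact}(G,g,\mathbf I)$ is the set of linear factorizations of $g$ ordered by $\mathbf x\le\mathbf y$ iff $\mathbf x$ is obtained from $\mathbf y$ by a finite sequence of merges. A Boolean lattice is the poset of all subsets of a finite set under inclusion. *)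

theory Defs
  imports "HOL-Algebra.Generated_Groups"
begin

definition word_prod :: "('a, 'b) monoid_scheme \<Rightarrow> 'a list \<Rightarrow> 'a" where
  "word_prod G ws = foldr (\<lambda>a b. a \<otimes>\<^bsub>G\<^esub> b) ws \<one>\<^bsub>G\<^esub>"

definition Mon :: "('a, 'b) monoid_scheme \<Rightarrow> 'a set \<Rightarrow> 'a set" where
  "Mon G X = {word_prod G ws | ws. set ws \<subseteq> X}"

definition ell :: "('a, 'b) monoid_scheme \<Rightarrow> 'a set \<Rightarrow> 'a \<Rightarrow> nat" where
  "ell G X x = (LEAST n. \<exists>ws. set ws \<subseteq> X \<and> length ws = n \<and> word_prod G ws = x)"

definition conj_closed :: "('a, 'b) monoid_scheme \<Rightarrow> 'a set \<Rightarrow> bool" where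
  "conj_closed G X \<longleftrightarrow>
     (\<forall>h\<in>carrier G. \<forall>x\<in>X. h \<otimes>\<^bsub>G\<^esub> x \<otimes>\<^bsub>G\<^esub> inv\<^bsub>G\<^esub> h \<in> X)"

text \<open>Linear factorizations of g: lists [x_L, x_1, ..., x_k, x_R] (length k+2).\<close>
definition linear_factorizations :: "('a, 'b) monoid_scheme \<Rightarrow> 'a set \<Rightarrow> 'a \<Rightarrow> 'a list set" where
  "linear_factorizations G X g =
     {xs. length xs \<ge> 2 \<and> set xs \<subseteq> Mon G X
        \<and> (\<forall>i. 0 < i \<and> i < length xs - 1 \<longrightarrow> xs ! i \<noteq> \<one>\<^bsub>G\<^esub>)
        \<and> (\<Sum>y\<leftarrow>xs. ell G X y) = ell G X g
        \<and> word_prod G xs = g}"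

definition merge_at :: "('a, 'b) monoid_scheme \<Rightarrow> nat \<Rightarrow> 'a list \<Rightarrow> 'a list" where
  "merge_at G i xs = take i xs @ [xs ! i \<otimes>\<^bsub>G\<^esub> xs ! Suc i] @ drop (Suc (Suc i)) xs"

definition merge_step :: "('a, 'b) monoid_scheme \<Rightarrow> 'a list \<Rightarrow> 'a list \<Rightarrow> bool" where
  "merge_step G ys xs \<longleftrightarrow> (\<exists>i. Suc i < length ys \<and> xs = merge_at G i ys)"

definition fact_le :: "('a, 'b) monoid_scheme \<Rightarrow> 'a set \<Rightarrow> 'a \<Rightarrow> 'a list \<Rightarrow> 'a list \<Rightarrow> bool" where
  "fact_le G X g xs ys \<longleftrightarrow>
     xs \<in> linear_factorizations G X g \<and> ys \<in> linear_factorizations G X g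
     \<and> (merge_step G)\<^sup>*\<^sup>* ys xs"

definition iso_boolean_lattice :: "'c set \<Rightarrow> ('c \<Rightarrow> 'c \<Rightarrow> bool) \<Rightarrow> bool" where
  "iso_boolean_lattice P r \<longleftrightarrow>
     (\<exists>(S :: nat set) f. finite S \<and> bij_betw f P (Pow S)
        \<and> (\<forall>z\<in>P. \<forall>w\<in>P. r z w \<longleftrightarrow> f z \<subseteq> f w))"

end

theory Submission
  imports Defs "HOL-Library.Sublist"
begin

text \<open>A word \<open>[w\<^sub>0, \<dots>, w\<^sub>n]\<close> is recorded by its proper partial products
  \<open>w\<^sub>0, w\<^sub>0 w\<^sub>1, \<dots>, w\<^sub>0 \<cdots> w\<^bsub>n-1\<^esub>\<close>, which together with the total product determine it;
  merging at position \<open>i\<close> deletes exactly the \<open>i\<close>-th partial product. For a linear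
  factorization, additivity of \<open>\<ell>\<close> and nontriviality of the inner entries make the partial
  products pairwise distinct. So the words obtained from a factorization \<open>y\<close> by merges correspond,
  order-preservingly, to the subsets of the set of partial products of \<open>y\<close>, and the interval
  \<open>[x, y]\<close> to the Boolean lattice of subsets of the partial products of \<open>y\<close> that are not partial
  products of \<open>x\<close>.\<close>

lemma subseq_eq_if_set_eq:
  assumes "subseq xs zs" "subseq ys zs" "distinct zs" "set xs = set ys"
  shows "xs = ys"
proof -
  have "inj_on set (set (subseqs zs))"
    using distinct_set_subseqs[OF assms(3)] by (simp add: distinct_map)
  then show ?thesis
    using inj_onD[of set _ xs ys] assms by simp
qed

lemma set_subset_if_subseq: "subseq xs ys \<Longrightarrow> set xs \<subseteq> set ys"
  by (metis subseq_conv_nths set_nths_subset)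

lemma distinct_if_subseq: "subseq xs ys \<Longrightarrow> distinct ys \<Longrightarrow> distinct xs"
  by (auto intro: subseqs_distinctD)

lemma subseq_take_drop_Suc: "subseq (take i xs @ drop (Suc i) xs) xs"
  by (metis Suc_eq_plus1 append_take_drop_id subseq_append
      subseq_order.eq_refl subseq_rev_drop_many take_add)

lemma set_take_drop_Suc:
  "distinct xs \<Longrightarrow> i < length xs \<Longrightarrow> set (take i xs @ drop (Suc i) xs) = set xs - {xs ! i}"
  by (metis distinct_take id_take_nth_drop not_distinct_conv_prefix nth_mem
      remove1_split set_remove1_eq)

lemma iso_boolean_lattice_cong:
  "iso_boolean_lattice P r' \<Longrightarrow> (\<And>z w. z \<in> P \<Longrightarrow> w \<in> P \<Longrightarrow> r z w \<longleftrightarrow> r' z w) \<Longrightarrow>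
   iso_boolean_lattice P r"
  unfolding iso_boolean_lattice_def by simp

lemma iso_boolean_lattice_PowI:
  fixes f :: "'c \<Rightarrow> 'd set"
  assumes "finite A" "bij_betw f P (Pow A)"
    and "\<And>z w. z \<in> P \<Longrightarrow> w \<in> P \<Longrightarrow> r z w \<longleftrightarrow> f z \<subseteq> f w"
  shows "iso_boolean_lattice P r"
proof -
  obtain h where h: "bij_betw h A {0..<card A}"
    using ex_bij_betw_finite_nat[OF assms(1)] by blast
  have "bij_betw (image h \<circ> f) P (Pow {0..<card A})"
    using bij_betw_trans[OF assms(2) bij_betw_Pow[OF h]] .
  moreover have "f z \<subseteq> f w \<longleftrightarrow> h ` f z \<subseteq> h ` f w" if "z \<in> P" "w \<in> P" for z w
  proof -
    have "f z \<subseteq> A" "f w \<subseteq> A"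
      using that assms(2) by (auto dest: bij_betwE)
    with bij_betw_imp_inj_on[OF h] show ?thesis
      by (blast dest: inj_on_image_mem_iff[THEN iffD1])
  qed
  ultimately show ?thesis
    unfolding iso_boolean_lattice_def using assms(3)
    by (intro exI[of _ "{0..<card A}"] exI[of _ "image h \<circ> f"]) auto
qed

lemma iso_boolean_lattice_intervalI:
  assumes "finite A" "B \<subseteq> A" "bij_betw f P {U. B \<subseteq> U \<and> U \<subseteq> A}"
    and "\<And>z w. z \<in> P \<Longrightarrow> w \<in> P \<Longrightarrow> r z w \<longleftrightarrow> f z \<subseteq> f w"
  shows "iso_boolean_lattice P r"
proof (rule iso_boolean_lattice_PowI)
  have "bij_betw (\<lambda>U. U - B) {U. B \<subseteq> U \<and> U \<subseteq> A} (Pow (A - B))"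
    by (rule bij_betw_byWitness[where f' = "\<lambda>V. V \<union> B"]) (use assms(2) in auto)
  then show "bij_betw (\<lambda>z. f z - B) P (Pow (A - B))"
    using bij_betw_trans[OF assms(3)] by (simp add: comp_def)
  show "r z w \<longleftrightarrow> f z - B \<subseteq> f w - B" if "z \<in> P" "w \<in> P" for z w
  proof -
    have "B \<subseteq> f z" "B \<subseteq> f w"
      using that bij_betwE[OF assms(3)] by auto
    then show ?thesis
      using assms(4)[OF that] by blast
  qed
qed (use assms(1) in simp)

section \<open>Words and partial products\<close>

lemma word_prod_Nil [simp]: "word_prod G [] = \<one>\<^bsub>G\<^esub>"
  by (simp add: word_prod_def)

lemma word_prod_Cons [simp]: "word_prod G (a # w) = a \<otimes>\<^bsub>G\<^esub> word_prod G w"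
  by (simp add: word_prod_def)

fun partial_prods :: "('a, 'b) monoid_scheme \<Rightarrow> 'a list \<Rightarrow> 'a list" where
  "partial_prods G [] = []"
| "partial_prods G [a] = []"
| "partial_prods G (a # b # r) = a # map (\<lambda>p. a \<otimes>\<^bsub>G\<^esub> p) (partial_prods G (b # r))"

lemma length_partial_prods [simp]: "length (partial_prods G w) = length w - 1"
  by (induction G w rule: partial_prods.induct) auto

lemma partial_prods_Cons:
  "w \<noteq> [] \<Longrightarrow> partial_prods G (a # w) = a # map (\<lambda>p. a \<otimes>\<^bsub>G\<^esub> p) (partial_prods G w)"
  by (cases w) auto

lemma merge_at_0 [simp]: "merge_at G 0 (a # b # r) = (a \<otimes>\<^bsub>G\<^esub> b) # r"
  by (simp add: merge_at_def)

lemma merge_at_Suc [simp]: "merge_at G (Suc i) (a # r) = a # merge_at G i r"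
  by (simp add: merge_at_def)

lemma length_merge_at [simp]: "Suc i < length w \<Longrightarrow> length (merge_at G i w) = length w - 1"
  by (simp add: merge_at_def)

lemma merge_stepE:
  assumes "merge_step G w w'"
  obtains A p q C where "w = A @ [p, q] @ C" "w' = A @ [p \<otimes>\<^bsub>G\<^esub> q] @ C"
proof -
  obtain i where i: "Suc i < length w" "w' = merge_at G i w"
    using assms unfolding merge_step_def by blast
  have "w = take i w @ [w ! i, w ! Suc i] @ drop (Suc (Suc i)) w"
    using i(1) by (simp add: Cons_nth_drop_Suc)
  then show ?thesis
    using that i(2) unfolding merge_at_def by blast
qed

context group
begin

lemma word_prod_closed: "set w \<subseteq> carrier G \<Longrightarrow> word_prod G w \<in> carrier G"
  by (induction w) auto

lemma word_prod_append:
  "set u \<subseteq> carrier G \<Longrightarrow> set v \<subseteq> carrier G \<Longrightarrow>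
   word_prod G (u @ v) = word_prod G u \<otimes> word_prod G v"
  by (induction u) (auto simp: m_assoc word_prod_closed)

lemma partial_prods_closed: "set w \<subseteq> carrier G \<Longrightarrow> set (partial_prods G w) \<subseteq> carrier G"
  by (induction w rule: induct_list012) auto

lemma nth_partial_prods:
  "k < length w - 1 \<Longrightarrow> set w \<subseteq> carrier G \<Longrightarrow> partial_prods G w ! k = word_prod G (take (Suc k) w)"
proof (induction w arbitrary: k rule: induct_list012)
  case (3 a b r)
  then show ?case
    by (cases k) simp_all
qed auto

lemma partial_prods_merge_at:
  "Suc i < length w \<Longrightarrow> set w \<subseteq> carrier G \<Longrightarrow>
   partial_prods G (merge_at G i w) = take i (partial_prods G w) @ drop (Suc i) (partial_prods G w)"
proof (induction i arbitrary: w)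
  case 0
  then obtain a b r where w: "w = a # b # r"
    by (cases w; cases "tl w") auto
  show ?case
  proof (cases r)
    case (Cons c r')
    have "set (partial_prods G (c # r')) \<subseteq> carrier G"
      using 0 w Cons by (intro partial_prods_closed) auto
    then show ?thesis
      using w Cons 0 by (auto simp: m_assoc)
  qed (simp add: w)
next
  case (Suc i)
  then obtain a r where w: "w = a # r" and "Suc i < length r"
    by (cases w) auto
  moreover have "r \<noteq> []" "merge_at G i r \<noteq> []"
    using \<open>Suc i < length r\<close> by (auto simp flip: length_greater_0_conv)
  ultimately show ?case
    using Suc by (simp add: partial_prods_Cons take_map drop_map)
qed

lemma partial_prods_inj:
  assumes "set w \<subseteq> carrier G" "set w' \<subseteq> carrier G" "w \<noteq> []" "w' \<noteq> []"
    and "partial_prods G w = partial_prods G w'" "word_prod G w = word_prod G w'"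
  shows "w = w'"
  using assms
proof (induction w arbitrary: w' rule: induct_list012)
  case (2 a)
  have "length w' = 1"
    using 2(4) arg_cong[OF 2(5), of length] by (cases w') auto
  then show ?case
    using 2 by (auto simp: length_Suc_conv)
next
  case (3 a b r)
  have "length w' = Suc (Suc (length r))"
    using arg_cong[OF 3(7), of length] by simp
  then obtain a' b' r' where "w' = a' # b' # r'"
    by (auto simp: length_Suc_conv)
  with 3(7) have w': "w' = a # b' # r'"
    by simp
  have "inj_on ((\<otimes>) a) (carrier G)"
    using 3(3) by (simp add: inj_on_cmult)
  moreover have "set (partial_prods G (b # r)) \<subseteq> carrier G"
    "set (partial_prods G (b' # r')) \<subseteq> carrier G"
    using 3 w' by (auto intro!: partial_prods_closed)
  ultimately have "partial_prods G (b # r) = partial_prods G (b' # r')"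
    using 3(7) w' by (auto intro: map_inj_on[OF _ inj_on_subset])
  moreover have "word_prod G (b # r) = word_prod G (b' # r')"
  proof -
    have "a \<otimes> word_prod G (b # r) = a \<otimes> word_prod G (b' # r')"
      using 3(8) unfolding w' word_prod_Cons[of G a] .
    then show ?thesis
      using 3(3,4) w' by (simp del: word_prod_Cons add: word_prod_closed)
  qed
  ultimately have "b # r = b' # r'"
    using 3(3,4) w' by (intro 3(2)) auto
  then show ?case
    using w' by simp
qed auto

section \<open>Merges below a word with distinct partial products\<close>

lemma merges_closed:
  "(merge_step G)\<^sup>*\<^sup>* w w' \<Longrightarrow> set w \<subseteq> carrier G \<Longrightarrow> set w' \<subseteq> carrier G"
  by (induction rule: rtranclp_induct) (auto elim!: merge_stepE)

lemma merges_word_prod: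
  "(merge_step G)\<^sup>*\<^sup>* w w' \<Longrightarrow> set w \<subseteq> carrier G \<Longrightarrow> word_prod G w' = word_prod G w"
  by (induction rule: rtranclp_induct)
    (auto elim!: merge_stepE dest!: merges_closed simp: word_prod_append word_prod_closed m_assoc)

lemma merges_nonempty: "(merge_step G)\<^sup>*\<^sup>* w w' \<Longrightarrow> w \<noteq> [] \<Longrightarrow> w' \<noteq> []"
  by (induction rule: rtranclp_induct) (auto elim!: merge_stepE)

lemma merges_subseq_partial_prods:
  "(merge_step G)\<^sup>*\<^sup>* w w' \<Longrightarrow> set w \<subseteq> carrier G \<Longrightarrow>
   subseq (partial_prods G w') (partial_prods G w)"
proof (induction rule: rtranclp_induct)
  case (step y z)
  then obtain i where "Suc i < length y" "z = merge_at G i y"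
    unfolding merge_step_def by blast
  then have "subseq (partial_prods G z) (partial_prods G y)"
    using merges_closed[OF step(1,4)] by (simp add: partial_prods_merge_at subseq_take_drop_Suc)
  then show ?case
    using step by (blast intro: subseq_order.order_trans)
qed simp

lemma merge_step_remove_partial_prod:
  assumes "set w \<subseteq> carrier G" "distinct (partial_prods G w)" "t \<in> set (partial_prods G w)"
  obtains w' where "merge_step G w w'" "set (partial_prods G w') = set (partial_prods G w) - {t}"
proof -
  obtain i where i: "i < length (partial_prods G w)" "partial_prods G w ! i = t"
    using assms(3) by (metis in_set_conv_nth)
  then have si: "Suc i < length w"
    by simp
  have "merge_step G w (merge_at G i w)"
    unfolding merge_step_def using si by blast
  moreover have "set (partial_prods G (merge_at G i w)) = set (partial_prods G w) - {t}"
    unfolding partial_prods_merge_at[OF si assms(1)]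
    using set_take_drop_Suc[OF assms(2) i(1)] i(2) by simp
  ultimately show ?thesis
    by (rule that)
qed

lemma merges_realize_partial_prods:
  assumes "set y \<subseteq> carrier G" "distinct (partial_prods G y)" "U \<subseteq> set (partial_prods G y)"
  obtains z where "(merge_step G)\<^sup>*\<^sup>* y z" "set (partial_prods G z) = U"
proof -
  have remove: "\<exists>z. (merge_step G)\<^sup>*\<^sup>* y z \<and> set (partial_prods G z) = set (partial_prods G y) - T"
    if "T \<subseteq> set (partial_prods G y)" for T
    using finite_subset[OF that finite_set] that
  proof (induction rule: finite_subset_induct)
    case empty
    show ?case
      by blast
  next
    case (insert t T)
    then obtain z where z: "(merge_step G)\<^sup>*\<^sup>* y z"
      "set (partial_prods G z) = set (partial_prods G y) - T"
      by blast
    have "set z \<subseteq> carrier G"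
      using merges_closed[OF z(1) assms(1)] .
    moreover have "distinct (partial_prods G z)"
      using distinct_if_subseq[OF merges_subseq_partial_prods[OF z(1) assms(1)] assms(2)] .
    moreover have "t \<in> set (partial_prods G z)"
      using insert.hyps(2,3) z(2) by blast
    ultimately obtain z' where z': "merge_step G z z'"
      "set (partial_prods G z') = set (partial_prods G z) - {t}"
      by (rule merge_step_remove_partial_prod)
    have "(merge_step G)\<^sup>*\<^sup>* y z'"
      using z(1) z'(1) by (rule rtranclp.rtrancl_into_rtrancl)
    moreover have "set (partial_prods G z') = set (partial_prods G y) - insert t T"
      using z(2) z'(2) by blast
    ultimately show ?case
      by blast
  qed
  obtain z where z: "(merge_step G)\<^sup>*\<^sup>* y z"
    "set (partial_prods G z) = set (partial_prods G y) - (set (partial_prods G y) - U)"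
    using remove[OF Diff_subset] by blast
  have "set (partial_prods G z) = U"
    using z(2) assms(3) by blast
  with z(1) show ?thesis
    by (rule that)
qed

lemma partial_prods_distinct_imp_nontrivial:
  assumes "set w \<subseteq> carrier G" "distinct (partial_prods G w)" "0 < i" "i < length w - 1"
  shows "w ! i \<noteq> \<one>"
proof
  assume one: "w ! i = \<one>"
  have "set (take i w) \<subseteq> carrier G"
    using assms(1) by (meson set_take_subset subset_trans)
  moreover have "take (Suc i) w = take i w @ [\<one>]"
    using assms(4) one by (simp add: take_Suc_conv_app_nth)
  ultimately have "word_prod G (take (Suc i) w) = word_prod G (take i w)"
    by (simp add: word_prod_append word_prod_closed)
  moreover have "partial_prods G w ! i = word_prod G (take (Suc i) w)"
    using assms(4,1) by (rule nth_partial_prods)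
  moreover have "partial_prods G w ! (i - 1) = word_prod G (take i w)"
    using assms(1,3,4) nth_partial_prods[of "i - 1" w] by simp
  ultimately have "partial_prods G w ! i = partial_prods G w ! (i - 1)"
    by simp
  then show False
    using assms(2,3,4) by (simp add: nth_eq_iff_index_eq)
qed

lemma merges_eqI:
  assumes y: "set y \<subseteq> carrier G" "y \<noteq> []" "distinct (partial_prods G y)"
    and z: "(merge_step G)\<^sup>*\<^sup>* y z" and z': "(merge_step G)\<^sup>*\<^sup>* y z'"
    and "set (partial_prods G z) = set (partial_prods G z')"
  shows "z = z'"
proof (rule partial_prods_inj)
  show "set z \<subseteq> carrier G" "set z' \<subseteq> carrier G"
    using merges_closed[OF z y(1)] merges_closed[OF z' y(1)] .
  show "z \<noteq> []" "z' \<noteq> []"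
    using merges_nonempty[OF z y(2)] merges_nonempty[OF z' y(2)] .
  show "partial_prods G z = partial_prods G z'"
    using merges_subseq_partial_prods[OF z y(1)] merges_subseq_partial_prods[OF z' y(1)] y(3) assms(6)
    by (rule subseq_eq_if_set_eq)
  show "word_prod G z = word_prod G z'"
    using merges_word_prod[OF z y(1)] merges_word_prod[OF z' y(1)] by simp
qed

lemma merges_iff_partial_prods_subset:
  assumes y: "set y \<subseteq> carrier G" "y \<noteq> []" "distinct (partial_prods G y)"
    and z: "(merge_step G)\<^sup>*\<^sup>* y z" and z': "(merge_step G)\<^sup>*\<^sup>* y z'"
  shows "(merge_step G)\<^sup>*\<^sup>* z' z \<longleftrightarrow> set (partial_prods G z) \<subseteq> set (partial_prods G z')"
proof
  assume "(merge_step G)\<^sup>*\<^sup>* z' z"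
  then show "set (partial_prods G z) \<subseteq> set (partial_prods G z')"
    using merges_closed[OF z' y(1)] by (intro set_subset_if_subseq merges_subseq_partial_prods)
next
  assume sub: "set (partial_prods G z) \<subseteq> set (partial_prods G z')"
  have "set z' \<subseteq> carrier G" "distinct (partial_prods G z')"
    using merges_closed[OF z' y(1)] distinct_if_subseq[OF merges_subseq_partial_prods[OF z' y(1)] y(3)]
    by auto
  then obtain w where w: "(merge_step G)\<^sup>*\<^sup>* z' w" "set (partial_prods G w) = set (partial_prods G z)"
    using sub by (rule merges_realize_partial_prods)
  have "w = z"
    using y rtranclp_trans[OF z' w(1)] z w(2) by (rule merges_eqI)
  then show "(merge_step G)\<^sup>*\<^sup>* z' z"
    using w(1) by simp
qed

lemma merge_interval_iso_boolean_lattice: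
  assumes y: "set y \<subseteq> carrier G" "y \<noteq> []" "distinct (partial_prods G y)"
    and x: "(merge_step G)\<^sup>*\<^sup>* y x"
  shows "iso_boolean_lattice {z. (merge_step G)\<^sup>*\<^sup>* y z \<and> (merge_step G)\<^sup>*\<^sup>* z x}
    (\<lambda>z w. (merge_step G)\<^sup>*\<^sup>* w z)"
proof -
  let ?P = "{z. (merge_step G)\<^sup>*\<^sup>* y z \<and> (merge_step G)\<^sup>*\<^sup>* z x}"
  let ?cuts = "\<lambda>z. set (partial_prods G z)"
  have le_iff: "(merge_step G)\<^sup>*\<^sup>* w z \<longleftrightarrow> ?cuts z \<subseteq> ?cuts w"
    if "(merge_step G)\<^sup>*\<^sup>* y z" "(merge_step G)\<^sup>*\<^sup>* y w" for z w
    using y that by (rule merges_iff_partial_prods_subset)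
  have "bij_betw ?cuts ?P {U. ?cuts x \<subseteq> U \<and> U \<subseteq> ?cuts y}"
  proof (rule bij_betw_imageI)
    show "inj_on ?cuts ?P"
    proof (rule inj_onI)
      fix z z'
      assume "z \<in> ?P" "z' \<in> ?P" "?cuts z = ?cuts z'"
      then show "z = z'"
        by (intro merges_eqI[OF y]) auto
    qed
    show "?cuts ` ?P = {U. ?cuts x \<subseteq> U \<and> U \<subseteq> ?cuts y}"
    proof (intro equalityI subsetI)
      fix U
      assume "U \<in> ?cuts ` ?P"
      then show "U \<in> {U. ?cuts x \<subseteq> U \<and> U \<subseteq> ?cuts y}"
        using le_iff x by auto
    next
      fix U
      assume U: "U \<in> {U. ?cuts x \<subseteq> U \<and> U \<subseteq> ?cuts y}"
      then obtain z where z: "(merge_step G)\<^sup>*\<^sup>* y z" "?cuts z = U"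
        using merges_realize_partial_prods[OF y(1,3)] by blast
      then have "(merge_step G)\<^sup>*\<^sup>* z x"
        using le_iff[OF x z(1)] U by simp
      with z show "U \<in> ?cuts ` ?P"
        by blast
    qed
  qed
  moreover have "?cuts x \<subseteq> ?cuts y"
    using le_iff[of x y] x by simp
  ultimately show ?thesis
    using le_iff by (intro iso_boolean_lattice_intervalI) auto
qed

end

definition ell_additive :: "('a, 'b) monoid_scheme \<Rightarrow> 'a set \<Rightarrow> 'a list \<Rightarrow> bool" where
  "ell_additive G X w \<longleftrightarrow>
     set w \<subseteq> Mon G X \<and> (\<Sum>a\<leftarrow>w. ell G X a) = ell G X (word_prod G w)"

locale group_alphabet = group G for G (structure) +
  fixes X :: "'a set"
  assumes alphabet_closed: "X \<subseteq> carrier G"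
begin

lemma Mon_closed: "Mon G X \<subseteq> carrier G"
  unfolding Mon_def using alphabet_closed word_prod_closed by blast

lemma one_in_Mon: "\<one> \<in> Mon G X"
  unfolding Mon_def by (auto intro!: exI[of _ "[]"])

lemma Mon_mult_closed:
  assumes "a \<in> Mon G X" "b \<in> Mon G X"
  shows "a \<otimes> b \<in> Mon G X"
proof -
  obtain u v where "set u \<subseteq> X" "a = word_prod G u" "set v \<subseteq> X" "b = word_prod G v"
    using assms unfolding Mon_def by blast
  then show ?thesis
    unfolding Mon_def using alphabet_closed
    by (intro CollectI exI[of _ "u @ v"]) (auto simp: word_prod_append)
qed

lemma word_prod_in_Mon: "set w \<subseteq> Mon G X \<Longrightarrow> word_prod G w \<in> Mon G X"
  by (induction w) (auto simp: one_in_Mon Mon_mult_closed)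

lemma ell_wordE:
  assumes "a \<in> Mon G X"
  obtains ws where "set ws \<subseteq> X" "length ws = ell G X a" "word_prod G ws = a"
proof -
  obtain ws where "set ws \<subseteq> X" "word_prod G ws = a"
    using assms unfolding Mon_def by blast
  then have "\<exists>n ws. set ws \<subseteq> X \<and> length ws = n \<and> word_prod G ws = a"
    by blast
  then have "\<exists>ws. set ws \<subseteq> X \<and> length ws = ell G X a \<and> word_prod G ws = a"
    unfolding ell_def by (rule LeastI_ex)
  then show ?thesis
    using that by blast
qed

lemma ell_le_length: "set ws \<subseteq> X \<Longrightarrow> ell G X (word_prod G ws) \<le> length ws"
  unfolding ell_def by (rule Least_le) blast

lemma ell_one [simp]: "ell G X \<one> = 0"
  using ell_le_length[of "[]"] by simp

lemma ell_eq_0_imp_one: "a \<in> Mon G X \<Longrightarrow> ell G X a = 0 \<Longrightarrow> a = \<one>"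
  by (metis ell_wordE length_0_conv word_prod_Nil)

lemma ell_mult_le:
  assumes "a \<in> Mon G X" "b \<in> Mon G X"
  shows "ell G X (a \<otimes> b) \<le> ell G X a + ell G X b"
proof -
  obtain u where u: "set u \<subseteq> X" "length u = ell G X a" "word_prod G u = a"
    using assms(1) by (rule ell_wordE)
  obtain v where v: "set v \<subseteq> X" "length v = ell G X b" "word_prod G v = b"
    using assms(2) by (rule ell_wordE)
  have "a \<otimes> b = word_prod G (u @ v)"
    using u v alphabet_closed by (simp add: word_prod_append)
  then show ?thesis
    using ell_le_length[of "u @ v"] u v by simp
qed

lemma ell_word_prod_le: "set w \<subseteq> Mon G X \<Longrightarrow> ell G X (word_prod G w) \<le> (\<Sum>a\<leftarrow>w. ell G X a)"
proof (induction w)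
  case (Cons a w)
  then have "ell G X (word_prod G (a # w)) \<le> ell G X a + ell G X (word_prod G w)"
    by (simp add: ell_mult_le word_prod_in_Mon)
  with Cons show ?case
    by simp
qed simp

lemma ell_additive_appendD:
  assumes "ell_additive G X (u @ v)"
  shows "ell_additive G X u" "ell_additive G X v"
proof -
  have M: "set u \<subseteq> Mon G X" "set v \<subseteq> Mon G X"
    using assms unfolding ell_additive_def by auto
  then have "word_prod G (u @ v) = word_prod G u \<otimes> word_prod G v"
    using Mon_closed by (simp add: word_prod_append subset_trans)
  then have "ell G X (word_prod G (u @ v)) \<le> ell G X (word_prod G u) + ell G X (word_prod G v)"
    using M by (simp add: ell_mult_le word_prod_in_Mon)
  moreover have "ell G X (word_prod G u) \<le> (\<Sum>a\<leftarrow>u. ell G X a)"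
    "ell G X (word_prod G v) \<le> (\<Sum>a\<leftarrow>v. ell G X a)"
    using M by (auto intro: ell_word_prod_le)
  ultimately show "ell_additive G X u" "ell_additive G X v"
    using assms M unfolding ell_additive_def by auto
qed

lemma ell_additive_word_prod_one:
  assumes "ell_additive G X w" "word_prod G w = \<one>" "a \<in> set w"
  shows "a = \<one>"
proof -
  have "(\<Sum>a\<leftarrow>w. ell G X a) = 0"
    using assms(1,2) unfolding ell_additive_def by simp
  then have "ell G X a = 0"
    using assms(3) by simp
  then show ?thesis
    using assms(1,3) ell_eq_0_imp_one unfolding ell_additive_def by blast
qed

text \<open>Two equal partial products would enclose a nonempty block of inner entries with product
  \<open>\<one>\<close>; by \<open>\<ell>\<close>-additivity all of them would be trivial.\<close>

lemma distinct_partial_prods_if_ell_additive: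
  assumes "ell_additive G X w" "\<forall>i. 0 < i \<and> i < length w - 1 \<longrightarrow> w ! i \<noteq> \<one>"
  shows "distinct (partial_prods G w)"
  using assms
proof (induction w rule: induct_list012)
  case (3 a b r)
  have tail: "ell_additive G X (b # r)"
    using ell_additive_appendD(2)[of "[a]" "b # r"] 3(3) by simp
  moreover have "\<forall>i. 0 < i \<and> i < length (b # r) - 1 \<longrightarrow> (b # r) ! i \<noteq> \<one>"
    using 3(4) by (auto dest: spec[of _ "Suc _"])
  ultimately have distinct_tail: "distinct (partial_prods G (b # r))"
    by (rule 3(2))
  have closed: "a \<in> carrier G" "set (b # r) \<subseteq> carrier G"
    using 3(3) Mon_closed unfolding ell_additive_def by auto
  have "\<one> \<notin> set (partial_prods G (b # r))"
  proof
    assume "\<one> \<in> set (partial_prods G (b # r))"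
    then obtain k where k: "k < length r" "word_prod G (take (Suc k) (b # r)) = \<one>"
      using closed(2) by (auto simp: in_set_conv_nth nth_partial_prods)
    have "ell_additive G X (take (Suc k) (b # r))"
      using ell_additive_appendD(1)[of "take (Suc k) (b # r)" "drop (Suc k) (b # r)"] tail by simp
    then have "b = \<one>"
      using k(2) by (rule ell_additive_word_prod_one) simp
    moreover have "b \<noteq> \<one>"
      using 3(4)[rule_format, of 1] k(1) by (cases r) simp_all
    ultimately show False
      by contradiction
  qed
  then have "a \<notin> (\<otimes>) a ` set (partial_prods G (b # r))"
    using closed partial_prods_closed[OF closed(2)] by auto
  moreover have "inj_on ((\<otimes>) a) (set (partial_prods G (b # r)))"
    using inj_on_cmult[OF closed(1)] partial_prods_closed[OF closed(2)] by (rule inj_on_subset)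
  ultimately show ?case
    using distinct_tail by (simp add: distinct_map)
qed auto

lemma merges_Mon: "(merge_step G)\<^sup>*\<^sup>* w w' \<Longrightarrow> set w \<subseteq> Mon G X \<Longrightarrow> set w' \<subseteq> Mon G X"
  by (induction rule: rtranclp_induct) (auto elim!: merge_stepE intro: Mon_mult_closed)

lemma merges_ell_sum_le:
  "(merge_step G)\<^sup>*\<^sup>* w w' \<Longrightarrow> set w \<subseteq> Mon G X \<Longrightarrow> (\<Sum>a\<leftarrow>w'. ell G X a) \<le> (\<Sum>a\<leftarrow>w. ell G X a)"
proof (induction rule: rtranclp_induct)
  case (step y z)
  obtain A p q C where y: "y = A @ [p, q] @ C" and z: "z = A @ [p \<otimes> q] @ C"
    using step(2) by (rule merge_stepE)
  have "p \<in> Mon G X" "q \<in> Mon G X"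
    using merges_Mon[OF step(1,4)] y by auto
  then have "ell G X (p \<otimes> q) \<le> ell G X p + ell G X q"
    by (rule ell_mult_le)
  then show ?case
    using step(3,4) y z by simp
qed simp

lemma linear_factorizationsD:
  assumes "xs \<in> linear_factorizations G X g"
  shows "set xs \<subseteq> carrier G" "xs \<noteq> []" "distinct (partial_prods G xs)"
proof -
  have "ell_additive G X xs" "\<forall>i. 0 < i \<and> i < length xs - 1 \<longrightarrow> xs ! i \<noteq> \<one>"
    using assms unfolding linear_factorizations_def ell_additive_def by auto
  then show "distinct (partial_prods G xs)"
    by (rule distinct_partial_prods_if_ell_additive)
  show "set xs \<subseteq> carrier G" "xs \<noteq> []"
    using assms Mon_closed unfolding linear_factorizations_def by auto
qed

lemma merges_between_linear_factorizations:
  assumes ys: "ys \<in> linear_factorizations G X g" and xs: "xs \<in> linear_factorizations G X g"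
    and "(merge_step G)\<^sup>*\<^sup>* ys w" "(merge_step G)\<^sup>*\<^sup>* w xs"
  shows "w \<in> linear_factorizations G X g"
proof -
  note ys_props = linear_factorizationsD[OF ys]
  have ys_Mon: "set ys \<subseteq> Mon G X"
    using ys unfolding linear_factorizations_def by simp
  have w_closed: "set w \<subseteq> carrier G"
    using merges_closed[OF assms(3) ys_props(1)] .
  have w_Mon: "set w \<subseteq> Mon G X"
    using merges_Mon[OF assms(3) ys_Mon] .
  have w_prod: "word_prod G w = g"
    using merges_word_prod[OF assms(3) ys_props(1)] ys unfolding linear_factorizations_def by simp
  have "(\<Sum>a\<leftarrow>w. ell G X a) \<le> ell G X g"
    using merges_ell_sum_le[OF assms(3) ys_Mon] ys unfolding linear_factorizations_def by simp
  moreover have "ell G X g \<le> (\<Sum>a\<leftarrow>w. ell G X a)"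
    using ell_word_prod_le[OF w_Mon] w_prod by simp
  ultimately have w_ell: "(\<Sum>a\<leftarrow>w. ell G X a) = ell G X g"
    by simp
  have w_distinct: "distinct (partial_prods G w)"
    using distinct_if_subseq[OF merges_subseq_partial_prods[OF assms(3) ys_props(1)] ys_props(3)] .
  have "length (partial_prods G xs) \<le> length (partial_prods G w)"
    using list_emb_length[OF merges_subseq_partial_prods[OF assms(4) w_closed]] .
  moreover have "2 \<le> length xs"
    using xs unfolding linear_factorizations_def by simp
  ultimately have "2 \<le> length w"
    by simp
  then show ?thesis
    unfolding linear_factorizations_def
    using w_Mon w_ell w_prod partial_prods_distinct_imp_nontrivial[OF w_closed w_distinct] by auto
qed

lemma fact_le_interval_eq:
  assumes "fact_le G X g xs ys"
  shows "{zs. fact_le G X g xs zs \<and> fact_le G X g zs ys} =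
    {z. (merge_step G)\<^sup>*\<^sup>* ys z \<and> (merge_step G)\<^sup>*\<^sup>* z xs}"
  using assms merges_between_linear_factorizations unfolding fact_le_def by blast

end

theorem proposition3p12:
  fixes G (structure) and X :: "'a set" and g :: 'a
  assumes "group G"
    and "X \<subseteq> carrier G"
    and "generate G X = carrier G"
    and "conj_closed G X"
    and "g \<in> Mon G X"
  shows "\<forall>xs ys. fact_le G X g xs ys \<longrightarrow>
           iso_boolean_lattice {zs. fact_le G X g xs zs \<and> fact_le G X g zs ys} (fact_le G X g)"
proof (intro allI impI)
  fix xs ys
  assume le: "fact_le G X g xs ys"
  interpret group_alphabet G X
    using assms(1,2) by (rule group_alphabet.intro[OF _ group_alphabet_axioms.intro])
  let ?I = "{zs. fact_le G X g xs zs \<and> fact_le G X g zs ys}"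
  have ys: "ys \<in> linear_factorizations G X g" and ys_xs: "(merge_step G)\<^sup>*\<^sup>* ys xs"
    using le unfolding fact_le_def by auto
  have "iso_boolean_lattice ?I (\<lambda>z w. (merge_step G)\<^sup>*\<^sup>* w z)"
    unfolding fact_le_interval_eq[OF le]
    using linear_factorizationsD[OF ys] ys_xs by (rule merge_interval_iso_boolean_lattice)
  moreover have "fact_le G X g z w \<longleftrightarrow> (merge_step G)\<^sup>*\<^sup>* w z" if "z \<in> ?I" "w \<in> ?I" for z w
    using that unfolding fact_le_def by auto
  ultimately show "iso_boolean_lattice ?I (fact_le G X g)"
    by (rule iso_boolean_lattice_cong)
qed

end
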